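(* Let $\mathcal P$ and $\mathrm{conv}(\mathcal P)$ be as in the context. Let $\eta$ be a real number with $0\le\eta\le\min\{L,(\overline C-\overline V)/V\}$ and let $\alpha,\beta,s_{\max}$ be integers such that (a) $L+1\le s_{\max}\le\min\{T-2,\lfloor(\overline C-\overline V)/V\rfloor\}$, (b) $1\le\alpha<\beta\le s_{\max}$, and (c) $\beta=\alpha+1$ or $s_{\max}\le L+\alpha$. Let $\mathcal S=[1,\alpha]_{\mathbb Z}\cup[\beta,s_{\max}]_{\mathbb Z}$. For any $t\in[s_{\max}+2,T]_{\mathbb Z}$, the inequality $$x_t\le(\overline V+\eta V)y_t+(\overline C-\overline V-\eta V)y_{t-1}-\sum_{s\in\mathcal S}(\overline C-\overline V-sV)(y_{t-s}-y_{t-s-1})\qquad(\ast)$$ is valid for $\mathrm{conv}(\mathcal P)$. For any $t\in[1,T-s_{\max}-1]_{\mathbb Z}$, the inequality $$x_t\le(\overline V+\eta V)y_t+(\overline C-\overline V-\eta V)y_{t+1}-\sum_{s\in\mathcal S}(\overline C-\overline V-sV)(y_{t+s}-y_{t+s+1})\qquad(\ast\ast)$$ is valid for $\mathrm{conv}(\mathcal P)$. Furthermore, $(\ast)$ and $(\ast\ast)$ are facet-defining for $\mathrm{conv}(\mathcal P)$ when $\eta\in\{0,(\overline C-\overline V)/V\}$ or $\eta=L\in\mathcal S$.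
   Context: For integers $a,b$, $[a,b]_{\mathbb Z}=\{a,a+1,\dots,b\}$ if $a\le b$ and $\emptyset$ otherwise. Fix a positive integer $T$, positive integers $L$ (minimum up time) and $\ell$ (minimum down time), and reals $\overline C,\underline C,V,\overline V$ with $\overline C>\underline C>0$, $V>0$, $\overline V+V\le\overline C$ and $\underline C<\overline V<\underline C+V$. $\mathcal P$ is the set of $(\mathbf x,\mathbf y)=((x_1,\dots,x_T),(y_1,\dots,y_T))\in\mathbb R_+^T\times\{0,1\}^T$ satisfying: (i) $-y_{t-1}+y_t-y_k\le 0$ for all $t\in[2,T]_{\mathbb Z}$, $k\in[t,\min\{T,t+L-1\}]_{\mathbb Z}$; (ii) $y_{t-1}-y_t+y_k\le 1$ for all $t\in[2,T]_{\mathbb Z}$, $k\in[t,\min\{T,t+\ell-1\}]_{\mathbb Z}$; (iii) $-x_t+\underline C y_t\le 0$ and $x_t-\overline C y_t\le 0$ for all $t\in[1,T]_{\mathbb Z}$; (iv) $x_t-x_{t-1}\le Vy_{t-1}+\overline V(1-y_{t-1})$ for all $t\in[2,T]_{\mathbb Z}$; (v) $x_{t-1}-x_t\le Vy_t+\overline V(1-y_t)$ for all $t\in[2,T]_{\mathbb Z}$. $\mathrm{conv}(\mathcal P)\subseteq\mathbb R^{2T}$ is its convex hull. A linear inequality is valid for $\mathrm{conv}(\mathcal P)$ if all its points satisfy it, and facet-defining if moreover the set of points of $\mathrm{conv}(\mathcal P)$ satisfying it with equality has dimension $\dim\mathrm{conv}(\mathcal P)-1$. *)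

theory Defs
  imports "HOL-Analysis.Analysis" "HOL-Library.Function_Algebras"
begin

text \<open>Real vector space structure on functions (pointwise). Points of R^T are
  represented as functions nat \<Rightarrow> real vanishing outside the index set 1..T.\<close>

instantiation "fun" :: (type, real_vector) real_vector
begin
definition scaleR_fun :: "real \<Rightarrow> ('a \<Rightarrow> 'b) \<Rightarrow> 'a \<Rightarrow> 'b"
  where "scaleR_fun r f = (\<lambda>i. r *\<^sub>R f i)"
instance
  by standard (auto simp: scaleR_fun_def fun_eq_iff scaleR_add_right scaleR_add_left)
end

type_synonym point = "(nat \<Rightarrow> real) \<times> (nat \<Rightarrow> real)"

text \<open>The set P of the context (x_t, y_t for t in 1..T; all other coordinates are zero).\<close>
definition UCP :: "nat \<Rightarrow> nat \<Rightarrow> nat \<Rightarrow> real \<Rightarrow> real \<Rightarrow> real \<Rightarrow> real \<Rightarrow> point set" where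
  "UCP T L l Cu Cl V Vu = {(x, y).
     (\<forall>t. t \<notin> {1..T} \<longrightarrow> x t = 0 \<and> y t = 0) \<and>
     (\<forall>t\<in>{1..T}. x t \<ge> 0 \<and> y t \<in> {0, 1}) \<and>
     (\<forall>t\<in>{2..T}. \<forall>k\<in>{t..min T (t + L - 1)}. - y (t - 1) + y t - y k \<le> 0) \<and>
     (\<forall>t\<in>{2..T}. \<forall>k\<in>{t..min T (t + l - 1)}. y (t - 1) - y t + y k \<le> 1) \<and>
     (\<forall>t\<in>{1..T}. - x t + Cl * y t \<le> 0 \<and> x t - Cu * y t \<le> 0) \<and>
     (\<forall>t\<in>{2..T}. x t - x (t - 1) \<le> V * y (t - 1) + Vu * (1 - y (t - 1))) \<and>
     (\<forall>t\<in>{2..T}. x (t - 1) - x t \<le> V * y t + Vu * (1 - y t))}"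

definition affdim :: "'a::real_vector set \<Rightarrow> int" where
  "affdim S = (if S = {} then -1 else int (dim ((\<lambda>v. v - (SOME a. a \<in> S)) ` S)))"

definition valid_ineq :: "point set \<Rightarrow> (point \<Rightarrow> real) \<Rightarrow> (point \<Rightarrow> real) \<Rightarrow> bool" where
  "valid_ineq Q lhs rhs = (\<forall>p\<in>Q. lhs p \<le> rhs p)"

definition facet_ineq :: "point set \<Rightarrow> (point \<Rightarrow> real) \<Rightarrow> (point \<Rightarrow> real) \<Rightarrow> bool" where
  "facet_ineq Q lhs rhs = (valid_ineq Q lhs rhs \<and>
     affdim {p\<in>Q. lhs p = rhs p} = affdim Q - 1)"

end

theory Submission
  imports Defs
begin

(* Write a s for y (t - s) in the first inequality and for y (t + s) in the second.  Both
   become one inequality between x t and a functional of the 0/1 window a 0, ..., a (smax + 1):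
   if k is the first off period after t, the ramping limits give x t <= Vu + (k - 1) V, and the
   right-hand side telescopes to at least this bound; a restart inside the gap between alpha
   and beta is handled by condition (c) and the minimum up time.  Validity passes to the convex
   hull because the inequality is linear.

   For the facets: 0 is in P, and P spans the same space as the 2T unit vectors.  Lowering the
   full-output run at one period k gives the x-unit vectors (the run lowered at t is the point
   off the face); single runs at minimum output, and runs ramping up to t (or down from t),
   lie on the face and give the indicator of [1, c] or of [c + 1, T] for every c.  At the
   switching period c = t - 1 (resp. c = t) the missing indicator is supplied exactly by the
   three admissible choices of eta. *)

section \<open>Linear inequalities on convex hulls\<close>

lemma affdim_eq_dim:
  fixes S :: "'a::real_vector set"
  assumes "0 \<in> S"
  shows "affdim S = int (dim S)"
proof -
  define a where "a = (SOME a. a \<in> S)"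
  have a: "a \<in> S" unfolding a_def using assms by (rule someI)
  have "(\<lambda>v. v - a) ` S \<subseteq> span S"
    using a by (auto intro: span_diff span_base)
  moreover have "S \<subseteq> span ((\<lambda>v. v - a) ` S)"
  proof
    fix v assume "v \<in> S"
    then have "(v - a) - (0 - a) \<in> span ((\<lambda>v. v - a) ` S)"
      using assms by (intro span_diff span_base) auto
    then show "v \<in> span ((\<lambda>v. v - a) ` S)" by simp
  qed
  ultimately have "span ((\<lambda>v. v - a) ` S) = span S"
    by (simp add: span_eq)
  then show ?thesis
    using assms unfolding affdim_def a_def by (auto dest: span_eq_dim)
qed

lemma dim_insert_notin_span:
  fixes S W :: "'a::real_vector set"
  assumes "finite W" "S \<subseteq> span W" "q \<notin> span S"
  shows "dim (insert q S) = dim S + 1"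
proof -
  obtain B where B: "B \<subseteq> S" "independent B" "S \<subseteq> span B" "card B = dim S"
    by (rule basis_exists)
  have "finite B"
    using independent_span_bound[OF assms(1) B(2)] B(1) assms(2) by blast
  have span_B: "span B = span S"
    using B(1,3) by (metis span_mono span_span subset_antisym)
  then have "q \<notin> span B" using assms(3) by simp
  then have "independent (insert q B)" "q \<notin> B"
    using independent_insertI[OF _ B(2)] span_base by auto
  moreover have "span (insert q B) = span (insert q S)"
    using span_B by (metis span_insert)
  ultimately show ?thesis
    using dim_eq_card \<open>finite B\<close> B(4) by (metis card_insert_disjoint Suc_eq_plus1)
qed

lemma affdim_hyperplane_section_convex_hull:
  fixes P W :: "'a::real_vector set" and \<psi> :: "'a \<Rightarrow> real"
  assumes "linear \<psi>" and "0 \<in> P" and "finite W" and "P \<subseteq> span W"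
    and "p \<in> P" and "\<psi> p \<noteq> 0" and "W \<subseteq> span (insert p {x \<in> P. \<psi> x = 0})"
  shows "affdim {x \<in> convex hull P. \<psi> x = 0} = affdim (convex hull P) - 1"
proof -
  define Q where "Q = convex hull P"
  define F where "F = {x \<in> Q. \<psi> x = 0}"
  have "P \<subseteq> Q" unfolding Q_def by (rule hull_subset)
  have "Q \<subseteq> span W"
    unfolding Q_def using assms(4) convex_hull_subset_span span_mono span_span by blast
  have "0 \<in> F" "0 \<in> Q"
    using assms(2) \<open>P \<subseteq> Q\<close> linear_0[OF assms(1)] unfolding F_def by auto
  have "p \<notin> span F"
    using linear_eq_0_on_span[OF assms(1), of F p] assms(6) unfolding F_def by auto
  have "insert p F \<subseteq> Q" "{x \<in> P. \<psi> x = 0} \<subseteq> F"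
    using assms(5) \<open>P \<subseteq> Q\<close> unfolding F_def by auto
  then have "span W \<subseteq> span (insert p F)"
    using assms(7) by (metis insert_mono span_mono span_minimal subspace_span subset_trans)
  then have "span Q = span (insert p F)"
    using \<open>Q \<subseteq> span W\<close> \<open>insert p F \<subseteq> Q\<close>
    by (metis span_minimal span_mono subset_antisym subspace_span subset_trans)
  then have "dim Q = dim F + 1"
    using dim_insert_notin_span[OF assms(3) _ \<open>p \<notin> span F\<close>] \<open>Q \<subseteq> span W\<close>
    unfolding F_def by (metis (no_types, lifting) mem_Collect_eq span_eq_dim subset_iff)
  then show ?thesis
    using affdim_eq_dim[OF \<open>0 \<in> F\<close>] affdim_eq_dim[OF \<open>0 \<in> Q\<close>] unfolding F_def Q_def by simp
qed

lemma valid_ineq_convex_hull: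
  assumes "linear (\<lambda>p. lhs p - rhs p)" and "valid_ineq P lhs rhs"
  shows "valid_ineq (convex hull P) lhs rhs"
proof -
  have "convex ((\<lambda>p. lhs p - rhs p) -` {..0})"
    by (rule convex_linear_vimage[OF assms(1)]) simp
  moreover have "P \<subseteq> (\<lambda>p. lhs p - rhs p) -` {..0}"
    using assms(2) unfolding valid_ineq_def by auto
  ultimately have "convex hull P \<subseteq> (\<lambda>p. lhs p - rhs p) -` {..0}"
    by (rule hull_minimal[rotated])
  then show ?thesis unfolding valid_ineq_def by auto
qed

section \<open>The inequality on a window of commitments\<close>

lemma sum_telescope_linear_weights:
  fixes a :: "nat \<Rightarrow> real"
  assumes "i \<le> n"
  shows "(\<Sum>s\<in>{i..n}. (D - real s * V) * (a s - a (s + 1)))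
       = (D - real i * V) * a i - V * (\<Sum>s\<in>{i+1..n}. a s) - (D - real n * V) * a (n + 1)"
  using assms
proof (induction n rule: dec_induct)
  case base
  then show ?case by (simp add: algebra_simps)
next
  case (step n)
  have "{i..Suc n} = insert (Suc n) {i..n}" "{i+1..Suc n} = insert (Suc n) {i+1..n}"
    using step by auto
  with step show ?case by (simp add: algebra_simps)
qed

lemma sum_split_at:
  fixes a :: "nat \<Rightarrow> real"
  assumes "i \<le> k + 1" "k \<le> n"
  shows "(\<Sum>s\<in>{i..n}. a s) = (\<Sum>s\<in>{i..k}. a s) + (\<Sum>s\<in>{k+1..n}. a s)"
proof -
  have "{i..n} = {i..k} \<union> {k+1..n}" using assms by auto
  then show ?thesis by (simp add: sum.union_disjoint)
qed

lemma indicator_reflect: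
  "a \<le> t \<Longrightarrow> s < t \<Longrightarrow> indicator {a..b} (t - s :: nat) = (indicator {t - b..t - a} s :: real)"
  by (auto simp: indicator_def)

lemma indicator_shift:
  "t \<le> b \<Longrightarrow> indicator {a..b} (t + s :: nat) = (indicator {a - t..b - t} s :: real)"
  by (auto simp: indicator_def)

locale window =
  fixes L m \<alpha> \<beta> :: nat and \<eta> D V Vu :: real
  assumes V_pos: "0 < V" and eta_nonneg: "0 \<le> \<eta>" and eta_le_L: "\<eta> \<le> real L"
    and eta_le: "\<eta> * V \<le> D" and m_le: "real m * V \<le> D" and L_less_m: "L < m"
    and alpha_pos: "1 \<le> \<alpha>" and alpha_less_beta: "\<alpha> < \<beta>" and beta_le_m: "\<beta> \<le> m"
    and beta_cases: "\<beta> = \<alpha> + 1 \<or> m \<le> L + \<alpha>"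
begin

abbreviation S :: "nat set" where
  "S \<equiv> {1..\<alpha>} \<union> {\<beta>..m}"

definition rhs :: "(nat \<Rightarrow> real) \<Rightarrow> real" where
  "rhs a = (Vu + \<eta> * V) * a 0 + (D - \<eta> * V) * a 1
     - (\<Sum>s\<in>S. (D - real s * V) * (a s - a (s + 1)))"

text \<open>The right-hand side for \<open>S = {1..n}\<close>, without its last term \<open>(D - n V) a (n + 1)\<close>.\<close>
definition ramp_bound :: "(nat \<Rightarrow> real) \<Rightarrow> nat \<Rightarrow> real" where
  "ramp_bound a n = (Vu + \<eta> * V) * a 0 + (1 - \<eta>) * V * a 1 + V * (\<Sum>s\<in>{2..n}. a s)"

lemma weight_nonneg:
  assumes "s \<le> m"
  shows "0 \<le> D - real s * V"
proof -
  have "real s * V \<le> real m * V"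
    using assms V_pos by (intro mult_right_mono) auto
  then show ?thesis using m_le by linarith
qed

lemma rhs_telescoped:
  "rhs a = ramp_bound a \<alpha> + (D - real \<alpha> * V) * a (\<alpha> + 1) - (D - real \<beta> * V) * a \<beta>
     + V * (\<Sum>s\<in>{\<beta>+1..m}. a s) + (D - real m * V) * a (m + 1)"
proof -
  have "(\<Sum>s\<in>S. (D - real s * V) * (a s - a (s + 1)))
      = (\<Sum>s\<in>{1..\<alpha>}. (D - real s * V) * (a s - a (s + 1)))
      + (\<Sum>s\<in>{\<beta>..m}. (D - real s * V) * (a s - a (s + 1)))"
    using alpha_less_beta by (intro sum.union_disjoint) auto
  also have "\<dots> = (D - V) * a 1 - V * (\<Sum>s\<in>{2..\<alpha>}. a s) - (D - real \<alpha> * V) * a (\<alpha> + 1)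
      + (D - real \<beta> * V) * a \<beta> - V * (\<Sum>s\<in>{\<beta>+1..m}. a s) - (D - real m * V) * a (m + 1)"
    using sum_telescope_linear_weights[of 1 \<alpha> D V a] sum_telescope_linear_weights[of \<beta> m D V a]
      alpha_pos beta_le_m by (simp add: numeral_2_eq_2)
  finally show ?thesis
    unfolding rhs_def ramp_bound_def by (simp add: algebra_simps)
qed

context
  fixes a :: "nat \<Rightarrow> real" and x :: real
  assumes binary: "\<And>s. s \<le> m + 1 \<Longrightarrow> a s = 0 \<or> a s = 1"
    and gap: "\<And>p r q. p < r \<Longrightarrow> r < q \<Longrightarrow> q \<le> m + 1 \<Longrightarrow> a p = 0 \<Longrightarrow> a r = 1 \<Longrightarrow> a q = 0
      \<Longrightarrow> p + L + 1 \<le> q"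
    and x_le_on: "x \<le> (Vu + D) * a 0"
    and x_le_ramp: "\<And>k. 1 \<le> k \<Longrightarrow> k \<le> m + 1 \<Longrightarrow> a k = 0 \<Longrightarrow> x \<le> Vu + (real k - 1) * V"
begin

lemma window_bounds: "s \<le> m + 1 \<Longrightarrow> 0 \<le> a s \<and> a s \<le> 1"
  using binary by force

lemma x_le_ramp_bound_first_off:
  assumes "1 \<le> k" "k \<le> n + 1" "n \<le> m" "a k = 0" and before: "\<And>j. 1 \<le> j \<Longrightarrow> j < k \<Longrightarrow> a j = 1"
  shows "x \<le> ramp_bound a n"
proof -
  have sum_nonneg: "0 \<le> (\<Sum>s\<in>{2..n}. a s)"
    using window_bounds assms(3) by (intro sum_nonneg) auto
  have a0: "a 0 = 0 \<or> a 0 = 1" using binary by simp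
  show ?thesis
  proof (cases "k = 1")
    case True
    have "x \<le> Vu * a 0"
      using a0 x_le_on x_le_ramp[of 1] assms(4) True by auto
    moreover have "0 \<le> \<eta> * V * a 0" "0 \<le> V * (\<Sum>s\<in>{2..n}. a s)"
      using eta_nonneg V_pos a0 sum_nonneg by auto
    ultimately show ?thesis
      using True assms(4) unfolding ramp_bound_def by (simp add: algebra_simps)
  next
    case False
    have "real (k - 2) = (\<Sum>s\<in>{2..k-1}. 1)"
      by simp
    also have "\<dots> = (\<Sum>s\<in>{2..k-1}. a s)"
      using before by (intro sum.cong) auto
    also have "\<dots> \<le> (\<Sum>s\<in>{2..n}. a s)"
      using window_bounds assms(2,3) by (intro sum_mono2) auto
    finally have "real k - 2 \<le> (\<Sum>s\<in>{2..n}. a s)"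
      using False assms(1) by simp
    then have "V * (real k - 2) \<le> V * (\<Sum>s\<in>{2..n}. a s)"
      using V_pos by (intro mult_left_mono) auto
    moreover have "a 1 = 1" using before False assms(1) by simp
    moreover have "x \<le> 0 \<and> a 0 = 0 \<and> V * real L + V \<le> V * real k
        \<or> x \<le> Vu + (real k - 1) * V \<and> a 0 = 1"
      using a0
    proof
      assume "a 0 = 0"
      then have "L + 1 \<le> k"
        using gap[of 0 1 k] \<open>a 1 = 1\<close> assms False by auto
      then have "V * (real L + 1) \<le> V * real k"
        using V_pos by (intro mult_left_mono) auto
      then show ?thesis using x_le_on \<open>a 0 = 0\<close> by (simp add: algebra_simps)
    qed (use x_le_ramp assms in auto)
    moreover have "\<eta> * V \<le> real L * V"
      using eta_le_L V_pos by (intro mult_right_mono) auto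
    ultimately show ?thesis
      unfolding ramp_bound_def by (auto simp: algebra_simps)
  qed
qed

lemma x_le_ramp_bound:
  assumes "n \<le> m" and "\<exists>z\<in>{1..n+1}. a z = 0"
  shows "x \<le> ramp_bound a n"
proof -
  obtain z where z: "1 \<le> z" "z \<le> n + 1" "a z = 0" using assms(2) by auto
  define k where "k = (LEAST k. 1 \<le> k \<and> a k = 0)"
  have "1 \<le> k" "a k = 0"
    using LeastI[of "\<lambda>k. 1 \<le> k \<and> a k = 0" z] z unfolding k_def by auto
  moreover have "k \<le> n + 1"
    using Least_le[of "\<lambda>k. 1 \<le> k \<and> a k = 0" z] z unfolding k_def by auto
  moreover have "a j = 1" if "1 \<le> j" "j < k" for j
  proof -
    have "a j \<noteq> 0" using not_less_Least[of j] that unfolding k_def by auto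
    then show ?thesis using binary[of j] that \<open>k \<le> n + 1\<close> assms(1) by auto
  qed
  ultimately show ?thesis
    using assms(1) by (intro x_le_ramp_bound_first_off)
qed

lemma x_le_full_ramp_bound: "x \<le> ramp_bound a m + (D - real m * V) * a (m + 1)"
proof (cases "\<exists>z\<in>{1..m+1}. a z = 0")
  case True
  moreover have "0 \<le> (D - real m * V) * a (m + 1)"
    using weight_nonneg[of m] window_bounds[of "m + 1"] by simp
  ultimately show ?thesis
    using x_le_ramp_bound[of m] by simp
next
  case False
  then have "a s = 1" if "1 \<le> s" "s \<le> m + 1" for s
    using binary that by fastforce
  then have "ramp_bound a m + (D - real m * V) * a (m + 1) = (Vu + \<eta> * V) * a 0 + D - \<eta> * V"
    using L_less_m unfolding ramp_bound_def by (simp add: algebra_simps)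
  moreover have "0 \<le> (D - \<eta> * V) * (1 - a 0)"
    using eta_le window_bounds[of 0] by simp
  ultimately show ?thesis
    using x_le_on by (simp add: algebra_simps)
qed

lemma beta_tail_bound:
  assumes "a (\<alpha> + 1) = 0"
  shows "(D - real \<beta> * V) * a \<beta> \<le> V * (\<Sum>s\<in>{\<beta>+1..m}. a s) + (D - real m * V) * a (m + 1)"
proof (cases "a \<beta> = 0")
  case True
  have "0 \<le> (\<Sum>s\<in>{\<beta>+1..m}. a s)" using window_bounds by (intro sum_nonneg) auto
  then show ?thesis
    using True V_pos weight_nonneg[of m] window_bounds[of "m + 1"] by simp
next
  case False
  then have "a \<beta> = 1" using binary[of \<beta>] beta_le_m by auto
  then have "\<alpha> + 1 < \<beta>"
    using alpha_less_beta assms by (metis Suc_eq_plus1 Suc_lessI zero_neq_one)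
  then have "m \<le> L + \<alpha>"
    using beta_cases by auto
  txt \<open>A restart after the off period \<open>\<alpha> + 1\<close> lasts at least \<open>L\<close> periods, which by
    \<open>m \<le> L + \<alpha>\<close> reaches beyond \<open>m + 1\<close>.\<close>
  have ones: "a s = 1" if "\<beta> \<le> s" "s \<le> m + 1" for s
  proof (rule ccontr)
    assume "a s \<noteq> 1"
    then have "a s = 0" "s \<noteq> \<beta>" using binary that \<open>a \<beta> = 1\<close> by auto
    then have "\<alpha> + 1 + L + 1 \<le> s"
      using gap[of "\<alpha> + 1" \<beta> s] assms \<open>a \<beta> = 1\<close> \<open>\<alpha> + 1 < \<beta>\<close> that by auto
    then show False using that \<open>m \<le> L + \<alpha>\<close> by simp
  qed
  then have "V * (\<Sum>s\<in>{\<beta>+1..m}. a s) = V * (real m - real \<beta>)"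
    using beta_le_m by simp
  then show ?thesis
    using ones[of \<beta>] ones[of "m + 1"] beta_le_m by (simp add: algebra_simps)
qed

lemma x_le_rhs: "x \<le> rhs a"
proof (cases "a (\<alpha> + 1) = 0")
  case False
  then have "a (\<alpha> + 1) = 1"
    using binary[of "\<alpha> + 1"] alpha_less_beta beta_le_m by auto
  have "(\<Sum>s\<in>{\<alpha>+1..\<beta>}. a s) \<le> (\<Sum>s\<in>{\<alpha>+1..\<beta>}. 1)"
    using window_bounds alpha_less_beta beta_le_m by (intro sum_mono) auto
  then have "V * (\<Sum>s\<in>{\<alpha>+1..\<beta>}. a s) \<le> V * (real \<beta> - real \<alpha>)"
    using V_pos alpha_less_beta by simp
  moreover have "(D - real \<beta> * V) * a \<beta> \<le> D - real \<beta> * V"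
    using weight_nonneg[OF beta_le_m] window_bounds[of \<beta>] beta_le_m by (simp add: mult_left_le)
  moreover have "ramp_bound a m = ramp_bound a \<alpha>
      + V * (\<Sum>s\<in>{\<alpha>+1..\<beta>}. a s) + V * (\<Sum>s\<in>{\<beta>+1..m}. a s)"
    using sum_split_at[of 2 \<alpha> m a] sum_split_at[of "\<alpha> + 1" \<beta> m a]
      alpha_pos alpha_less_beta beta_le_m unfolding ramp_bound_def by (simp add: algebra_simps)
  ultimately show ?thesis
    using x_le_full_ramp_bound \<open>a (\<alpha> + 1) = 1\<close> unfolding rhs_telescoped
    by (simp add: algebra_simps)
next
  case True
  have "rhs a = ramp_bound a \<alpha> - (D - real \<beta> * V) * a \<beta>
      + V * (\<Sum>s\<in>{\<beta>+1..m}. a s) + (D - real m * V) * a (m + 1)"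
    using True by (simp add: rhs_telescoped)
  then show ?thesis
    using beta_tail_bound[OF True] x_le_ramp_bound[of \<alpha>] True alpha_less_beta beta_le_m
    by force
qed

end

lemma rhs_cong:
  assumes "\<And>s. s \<le> m + 1 \<Longrightarrow> a s = b s"
  shows "rhs a = rhs b"
proof -
  have "(\<Sum>s\<in>S. (D - real s * V) * (a s - a (s + 1))) = (\<Sum>s\<in>S. (D - real s * V) * (b s - b (s + 1)))"
    using assms alpha_less_beta beta_le_m by (intro sum.cong) auto
  then show ?thesis
    unfolding rhs_def using assms[of 0] assms[of 1] by simp
qed

lemma rhs_zero_window: "(\<And>s. s \<le> m + 1 \<Longrightarrow> a s = 0) \<Longrightarrow> rhs a = 0"
  using rhs_cong[of a "\<lambda>_. 0"] by (simp add: rhs_def)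

lemma rhs_indicator:
  assumes "p \<le> q"
  shows "rhs (indicator {p..q}) = (if p = 0 then Vu + \<eta> * V else 0)
    + (if p \<le> 1 \<and> 1 \<le> q then D - \<eta> * V else 0) - (if q \<in> S then D - real q * V else 0)
    + (if 1 \<le> p \<and> p - 1 \<in> S then D - real (p - 1) * V else 0)"
proof -
  have jump: "indicator {p..q} s - indicator {p..q} (s + 1)
      = (if s = q then 1 else 0) - (if s = p - 1 \<and> 1 \<le> p then 1 else (0::real))" for s
    using assms by (auto simp: indicator_def)
  have "(\<Sum>s\<in>S. (D - real s * V) * (indicator {p..q} s - indicator {p..q} (s + 1)))
      = (\<Sum>s\<in>S. if s = q then D - real s * V else 0)
      - (\<Sum>s\<in>S. if s = p - 1 \<and> 1 \<le> p then D - real s * V else 0)"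
    unfolding jump by (simp add: right_diff_distrib sum_subtractf if_distrib[of "(*) _"] cong: if_cong)
  also have "\<dots> = (if q \<in> S then D - real q * V else 0)
      - (if 1 \<le> p \<and> p - 1 \<in> S then D - real (p - 1) * V else 0)"
    by (cases "1 \<le> p") simp_all
  finally show ?thesis
    unfolding rhs_def using assms by (simp add: indicator_def)
qed

lemma rhs_indicator_full:
  "m < q \<Longrightarrow> rhs (indicator {0..q}) = Vu + D"
  using alpha_less_beta beta_le_m by (auto simp: rhs_indicator)

lemma rhs_indicator_ramp:
  "s \<in> S \<or> s = 0 \<and> \<eta> = 0 \<Longrightarrow> rhs (indicator {0..s}) = Vu + real s * V"
  using alpha_less_beta by (auto simp: rhs_indicator)

lemma rhs_indicator_late_start:
  "2 \<le> p \<Longrightarrow> p \<le> q \<Longrightarrow> m < q \<Longrightarrow> p - 1 \<notin> S \<Longrightarrow> rhs (indicator {p..q}) = 0"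
  using alpha_less_beta beta_le_m by (auto simp: rhs_indicator)

lemma rhs_indicator_off_now:
  "\<eta> * V = D \<Longrightarrow> m < q \<Longrightarrow> rhs (indicator {1..q}) = 0"
  using alpha_less_beta beta_le_m by (auto simp: rhs_indicator)

lemma rhs_indicator_L:
  assumes "\<eta> = real L" "L \<in> S"
  shows "rhs (indicator {1..L}) = 0"
proof -
  have "rhs (indicator {1..L}) = (D - \<eta> * V) - (D - real L * V)"
    using assms(2) alpha_less_beta by (subst rhs_indicator) auto
  then show ?thesis using assms(1) by simp
qed

lemma linear_window_functional:
  "linear (\<lambda>p :: point. fst p t - rhs (\<lambda>s. snd p (f s)))"
  by (rule linearI)
    (simp_all add: rhs_def algebra_simps sum.distrib sum_subtractf sum_distrib_left scaleR_fun_def)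

end

section \<open>Feasible schedules\<close>

lemma ex_switch_on:
  fixes Q :: "nat \<Rightarrow> bool"
  assumes "\<not> Q p" "Q r" "p < r"
  shows "\<exists>u. p < u \<and> u \<le> r \<and> \<not> Q (u - 1) \<and> Q u"
  using assms
proof (induction r)
  case (Suc r)
  show ?case
  proof (cases "Q r")
    case True
    then have "p < r" using Suc.prems by (metis less_SucE)
    then show ?thesis using Suc.IH True Suc.prems(1) le_SucI by blast
  next
    case False
    then show ?thesis using Suc.prems by (intro exI[of _ "Suc r"]) auto
  qed
qed simp

context
  fixes T L l :: nat and Cu Cl V Vu :: real and x y :: "nat \<Rightarrow> real"
  assumes UCP: "(x, y) \<in> UCP T L l Cu Cl V Vu"
begin

lemma UCP_outside: "i \<notin> {1..T} \<Longrightarrow> x i = 0 \<and> y i = 0"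
  using UCP unfolding UCP_def by auto

lemma UCP_binary: "i \<in> {1..T} \<Longrightarrow> y i = 0 \<or> y i = 1"
  using UCP unfolding UCP_def by auto

lemma UCP_output_le: "i \<in> {1..T} \<Longrightarrow> x i \<le> Cu * y i"
  using UCP unfolding UCP_def by auto

lemma UCP_output_off:
  assumes "y i = 0"
  shows "x i = 0"
proof (cases "i \<in> {1..T}")
  case True
  then have "0 \<le> x i" "x i \<le> Cu * y i"
    using UCP unfolding UCP_def by auto
  then show ?thesis using assms by simp
qed (use UCP_outside in blast)

lemma UCP_ramp_up_step:
  assumes "t \<in> {2..T}"
  shows "x t \<le> (if y (t - 1) = 0 then Vu else x (t - 1) + V)"
proof -
  have "x t - x (t - 1) \<le> V * y (t - 1) + Vu * (1 - y (t - 1))"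
    using UCP assms unfolding UCP_def by blast
  moreover have "t - 1 \<in> {1..T}"
    using assms by auto
  then have "y (t - 1) = 0 \<or> y (t - 1) = 1"
    by (rule UCP_binary)
  ultimately show ?thesis
    using UCP_output_off[of "t - 1"] by auto
qed

lemma UCP_ramp_down_step:
  assumes "t \<in> {2..T}"
  shows "x (t - 1) \<le> (if y t = 0 then Vu else x t + V)"
proof -
  have "x (t - 1) - x t \<le> V * y t + Vu * (1 - y t)"
    using UCP assms unfolding UCP_def by blast
  moreover have "y t = 0 \<or> y t = 1"
    using UCP_binary[of t] assms by auto
  ultimately show ?thesis
    using UCP_output_off[of t] by auto
qed

lemma UCP_output_after_off:
  assumes "0 \<le> V" "1 \<le> p" "y p = 0" "1 \<le> d" "p + d \<le> T"
  shows "x (p + d) \<le> Vu + (real d - 1) * V"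
  using assms(4)
proof (induction d rule: dec_induct)
  case base
  then show ?case using UCP_ramp_up_step[of "p + 1"] assms by auto
next
  case (step n)
  then have "x (p + Suc n) \<le> (if y (p + n) = 0 then Vu else x (p + n) + V)"
    using UCP_ramp_up_step[of "p + Suc n"] assms by auto
  moreover have "0 \<le> V * real n" using assms(1) by simp
  ultimately show ?case
    using step.IH by (auto split: if_splits simp: algebra_simps)
qed

lemma UCP_output_before_off:
  assumes "0 \<le> V" "q \<le> T" "y q = 0" "1 \<le> d" "d < q"
  shows "x (q - d) \<le> Vu + (real d - 1) * V"
  using assms(4)
proof (induction d rule: dec_induct)
  case base
  then show ?case using UCP_ramp_down_step[of q] assms by auto
next
  case (step n)
  then have "q - n \<in> {2..T}" "q - n - 1 = q - Suc n" using assms by auto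
  then have "x (q - Suc n) \<le> (if y (q - n) = 0 then Vu else x (q - n) + V)"
    using UCP_ramp_down_step[of "q - n"] by simp
  moreover have "0 \<le> V * real n" using assms(1) by simp
  ultimately show ?case
    using step.IH by (auto split: if_splits simp: algebra_simps)
qed

lemma UCP_min_up:
  assumes "1 \<le> p" "p < r" "r < q" "q \<le> T" "y p = 0" "y r = 1" "y q = 0"
  shows "p + L + 1 \<le> q"
proof (rule ccontr)
  assume "\<not> p + L + 1 \<le> q"
  obtain u where u: "p < u" "u \<le> r" "y (u - 1) \<noteq> 1" "y u = 1"
    using ex_switch_on[of "\<lambda>i. y i = 1" p r] assms by auto
  have "\<forall>t\<in>{2..T}. \<forall>k\<in>{t..min T (t + L - 1)}. - y (t - 1) + y t - y k \<le> 0"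
    using UCP unfolding UCP_def by blast
  moreover have "u \<in> {2..T}" "q \<in> {u..min T (u + L - 1)}"
    using u assms \<open>\<not> p + L + 1 \<le> q\<close> by auto
  ultimately have "- y (u - 1) + y u - y q \<le> 0"
    by blast
  moreover have "u - 1 \<in> {1..T}"
    using u assms by auto
  then have "y (u - 1) = 0"
    using UCP_binary[of "u - 1"] u by auto
  ultimately show False using u assms by simp
qed

end

definition run :: "(nat \<Rightarrow> real) \<Rightarrow> nat \<Rightarrow> nat \<Rightarrow> point" where
  "run f a b = (\<lambda>i. indicator {a..b} i * f i, indicator {a..b})"

lemma fst_run [simp]: "fst (run f a b) i = indicator {a..b} i * f i"
  and snd_run [simp]: "snd (run f a b) = indicator {a..b}"
  by (simp_all add: run_def)

lemma interval_min_up: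
  fixes a b t k :: nat
  assumes "a = 1 \<or> b = T \<or> a + L \<le> b + 1" "t \<in> {2..T}" "k \<in> {t..min T (t + L - 1)}"
  shows "- indicator {a..b} (t - 1) + indicator {a..b} t - indicator {a..b} k \<le> (0::real)"
proof (cases "t - 1 \<notin> {a..b} \<and> t \<in> {a..b}")
  case True
  then have "k \<in> {a..b}" using assms by auto
  then show ?thesis using True by simp
qed (auto simp: indicator_def)

lemma interval_min_down:
  fixes a b t k :: nat
  assumes "t \<le> k"
  shows "indicator {a..b} (t - 1) - indicator {a..b} t + indicator {a..b} k \<le> (1::real)"
proof (cases "t - 1 \<in> {a..b} \<and> t \<notin> {a..b}")
  case True
  then have "k \<notin> {a..b}" using assms by auto
  then show ?thesis using True by simp
qed (auto simp: indicator_def)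

lemma run_in_UCP:
  assumes "1 \<le> a" "a \<le> b" "b \<le> T" and min_up: "a = 1 \<or> b = T \<or> a + L \<le> b + 1"
    and range: "\<And>i. i \<in> {a..b} \<Longrightarrow> Cl \<le> f i \<and> f i \<le> Cu"
    and ramp: "\<And>i. a \<le> i \<Longrightarrow> i < b \<Longrightarrow> \<bar>f (i + 1) - f i\<bar> \<le> V"
    and startup: "2 \<le> a \<Longrightarrow> f a \<le> Vu" and shutdown: "b < T \<Longrightarrow> f b \<le> Vu"
    and "0 \<le> Cl" "0 \<le> V" "0 \<le> Vu"
  shows "run f a b \<in> UCP T L l Cu Cl V Vu"
proof -
  define x where "x = fst (run f a b)"
  define y where "y = snd (run f a b)"
  have on: "x i = f i" "y i = 1" if "i \<in> {a..b}" for i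
    using that unfolding x_def y_def run_def by auto
  have off: "x i = 0" "y i = 0" if "i \<notin> {a..b}" for i
    using that unfolding x_def y_def run_def by auto
  have ramping: "x t - x (t - 1) \<le> V * y (t - 1) + Vu * (1 - y (t - 1))
      \<and> x (t - 1) - x t \<le> V * y t + Vu * (1 - y t)" if "t \<in> {2..T}" for t
  proof (cases "t - 1 \<in> {a..b}"; cases "t \<in> {a..b}")
    assume "t - 1 \<in> {a..b}" "t \<in> {a..b}"
    then have "\<bar>f t - f (t - 1)\<bar> \<le> V"
      using ramp[of "t - 1"] that by auto
    then show ?thesis using \<open>t - 1 \<in> {a..b}\<close> \<open>t \<in> {a..b}\<close> by (simp add: on abs_le_iff)
  next
    assume "t - 1 \<in> {a..b}" "t \<notin> {a..b}"
    then have "t - 1 = b" "b < T" using that by auto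
    then show ?thesis using range[of b] shutdown \<open>t - 1 \<in> {a..b}\<close> \<open>t \<notin> {a..b}\<close> \<open>0 \<le> V\<close> \<open>0 \<le> Cl\<close>
      by (auto simp: on off)
  next
    assume "t - 1 \<notin> {a..b}" "t \<in> {a..b}"
    then have "t = a" "2 \<le> a" using that by auto
    then show ?thesis using range[of a] startup \<open>t - 1 \<notin> {a..b}\<close> \<open>t \<in> {a..b}\<close> \<open>0 \<le> V\<close> \<open>0 \<le> Cl\<close>
      by (auto simp: on off)
  next
    assume "t - 1 \<notin> {a..b}" "t \<notin> {a..b}"
    then show ?thesis using \<open>0 \<le> Vu\<close> by (simp add: off)
  qed
  have min_up_time: "- y (t - 1) + y t - y k \<le> 0" if "t \<in> {2..T}" "k \<in> {t..min T (t + L - 1)}" for t k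
    unfolding y_def snd_run by (rule interval_min_up) (use that min_up in auto)
  have min_down_time: "y (t - 1) - y t + y k \<le> 1" if "k \<in> {t..min T (t + l - 1)}" for t k
    unfolding y_def snd_run by (rule interval_min_down) (use that in auto)
  have outside: "x t = 0 \<and> y t = 0" if "t \<notin> {1..T}" for t
    using that assms(1,3) off by auto
  have capacity: "0 \<le> x t \<and> y t \<in> {0, 1} \<and> - x t + Cl * y t \<le> 0 \<and> x t - Cu * y t \<le> 0" for t
    using range[of t] \<open>0 \<le> Cl\<close> by (cases "t \<in> {a..b}") (auto simp: on off)
  have "(x, y) \<in> UCP T L l Cu Cl V Vu"
    unfolding UCP_def mem_Collect_eq prod.case
    using outside capacity min_up_time min_down_time ramping by (intro conjI ballI allI impI) auto
  then show ?thesis by (simp only: x_def y_def prod.collapse)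
qed

lemma zero_in_UCP: "0 \<le> Vu \<Longrightarrow> 0 \<in> UCP T L l Cu Cl V Vu"
  unfolding UCP_def zero_prod_def by auto

section \<open>Spanning the schedule space\<close>

definition unit_points :: "nat \<Rightarrow> point set" where
  "unit_points T = (\<lambda>k. (indicator {k}, 0)) ` {1..T} \<union> (\<lambda>k. (0, indicator {k})) ` {1..T}"

lemma sum_fun_apply: "(\<Sum>k\<in>A. f k) i = (\<Sum>k\<in>A. f k i)"
  by (induction A rule: infinite_finite_induct) auto

lemma supported_eq_sum_indicators:
  fixes x :: "nat \<Rightarrow> real"
  assumes "\<And>i. i \<notin> {1..T} \<Longrightarrow> x i = 0"
  shows "x = (\<Sum>k\<in>{1..T}. x k *\<^sub>R indicator {k})"
proof
  fix i
  have "(\<Sum>k\<in>{1..T}. x k *\<^sub>R indicator {k}) i = (\<Sum>k\<in>{1..T}. if k = i then x k else 0)"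
    unfolding sum_fun_apply scaleR_fun_def by (intro sum.cong) (auto simp: indicator_def)
  also have "\<dots> = x i"
    using assms[of i] by (subst sum.delta) auto
  finally show "x i = (\<Sum>k\<in>{1..T}. x k *\<^sub>R indicator {k}) i" ..
qed

lemma supported_point_eq_sum:
  fixes x y :: "nat \<Rightarrow> real"
  assumes "\<And>i. i \<notin> {1..T} \<Longrightarrow> x i = 0"
  shows "(x, y) = (\<Sum>k\<in>{1..T}. x k *\<^sub>R (indicator {k}, 0)) + (0, y)"
  using supported_eq_sum_indicators[OF assms] by (simp add: prod_eq_iff fst_sum snd_sum)

lemma snd_in_span_if_units:
  fixes x y :: "nat \<Rightarrow> real"
  assumes "\<And>i. i \<notin> {1..T} \<Longrightarrow> x i = 0" and "(x, y) \<in> span X"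
    and "\<And>k. k \<in> {1..T} \<Longrightarrow> (indicator {k}, 0) \<in> span X"
  shows "(0, y) \<in> span X"
proof -
  have "(\<Sum>k\<in>{1..T}. x k *\<^sub>R (indicator {k}, 0)) \<in> span X"
    using assms(3) by (intro span_sum span_scale) auto
  then have "(x, y) - (\<Sum>k\<in>{1..T}. x k *\<^sub>R (indicator {k}, 0)) \<in> span X"
    using assms(2) by (rule span_diff[rotated])
  moreover have "(x, y) - (\<Sum>k\<in>{1..T}. x k *\<^sub>R (indicator {k}, 0)) = (0, y)"
    using supported_point_eq_sum[OF assms(1), where y = y] by (simp add: diff_eq_eq add.commute)
  ultimately show ?thesis by simp
qed

lemma zero_snd_in_span:
  assumes "F \<subseteq> UCP T L l Cu Cl V Vu" "F \<subseteq> span X"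
    and "\<And>k. k \<in> {1..T} \<Longrightarrow> (indicator {k}, 0) \<in> span X"
    and "y \<in> span (snd ` F)"
  shows "(0, y) \<in> span X"
proof -
  have "(0, snd p) \<in> span X" if "p \<in> F" for p
  proof (rule snd_in_span_if_units[where T = T])
    have "(fst p, snd p) \<in> UCP T L l Cu Cl V Vu" using that assms(1) by auto
    then show "fst p i = 0" if "i \<notin> {1..T}" for i
      using UCP_outside that by blast
    show "(fst p, snd p) \<in> span X" using that assms(2) by auto
  qed (rule assms(3))
  then have "span ((\<lambda>y. (0, y)) ` snd ` F) \<subseteq> span X"
    by (intro span_minimal subspace_span) auto
  moreover have "linear (\<lambda>y :: nat \<Rightarrow> real. (0 :: nat \<Rightarrow> real, y))"
    by (rule linearI) auto
  ultimately show ?thesis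
    using assms(4) span_linear_image by blast
qed

lemma UCP_subset_span_unit_points: "UCP T L l Cu Cl V Vu \<subseteq> span (unit_points T)"
proof clarify
  fix x y assume "(x, y) \<in> UCP T L l Cu Cl V Vu"
  then have x0: "\<And>i. i \<notin> {1..T} \<Longrightarrow> x i = 0" and y0: "\<And>i. i \<notin> {1..T} \<Longrightarrow> y i = 0"
    unfolding UCP_def by auto
  have x_part: "(\<Sum>k\<in>{1..T}. x k *\<^sub>R (indicator {k}, 0)) \<in> span (unit_points T)"
    by (intro span_sum span_scale span_base) (auto simp: unit_points_def)
  have "(0, y) = (\<Sum>k\<in>{1..T}. y k *\<^sub>R (0, indicator {k}))"
    using supported_eq_sum_indicators[where x = y] y0 by (simp add: prod_eq_iff fst_sum snd_sum)
  also have "\<dots> \<in> span (unit_points T)"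
    by (intro span_sum span_scale span_base) (auto simp: unit_points_def)
  finally have "(0, y) \<in> span (unit_points T)" .
  then show "(x, y) \<in> span (unit_points T)"
    using span_add[OF x_part] supported_point_eq_sum[OF x0, where y = y] by simp
qed

lemma unit_indicators_in_span:
  fixes Y :: "(nat \<Rightarrow> real) set"
  assumes full: "indicator {1..T} \<in> span Y"
    and cover: "\<And>c. c \<in> {1..<T} \<Longrightarrow> indicator {1..c} \<in> span Y \<or> indicator {c+1..T} \<in> span Y"
    and "k \<in> {1..T}"
  shows "indicator {k} \<in> span Y"
proof -
  have prefix: "indicator {1..c} \<in> span Y" if "c \<le> T" for c
  proof (cases "c = 0 \<or> c = T")
    case True
    have "indicator {1..0} = (0 :: nat \<Rightarrow> real)" by (auto simp: fun_eq_iff)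
    then show ?thesis using True full span_zero by auto
  next
    case False
    then have "c \<in> {1..<T}" using that by auto
    moreover have "indicator {1..c} = indicator {1..T} - (indicator {c+1..T} :: nat \<Rightarrow> real)"
      using that by (auto simp: indicator_def fun_eq_iff)
    ultimately show ?thesis using cover full span_diff by metis
  qed
  have "indicator {k} = indicator {1..k} - (indicator {1..k-1} :: nat \<Rightarrow> real)"
    using assms(3) by (auto simp: indicator_def fun_eq_iff)
  then show ?thesis
    using prefix[of k] prefix[of "k - 1"] assms(3) span_diff by fastforce
qed

section \<open>Validity and facets\<close>

locale ucp = window L m \<alpha> \<beta> \<eta> "Cu - Vu" V Vu for L m \<alpha> \<beta> :: nat and \<eta> Cu V Vu :: real +
  fixes T l :: nat and Cl :: real
  assumes Cl_pos: "0 < Cl" and Cl_less_Vu: "Cl < Vu" and L_pos: "1 \<le> L" and m_less_T: "m + 2 \<le> T"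
begin

abbreviation P :: "point set" where
  "P \<equiv> UCP T L l Cu Cl V Vu"

definition past_rhs :: "nat \<Rightarrow> (nat \<Rightarrow> real) \<Rightarrow> real" where
  "past_rhs t y = rhs (\<lambda>s. y (t - s))"

definition future_rhs :: "nat \<Rightarrow> (nat \<Rightarrow> real) \<Rightarrow> real" where
  "future_rhs t y = rhs (\<lambda>s. y (t + s))"

lemma past_valid:
  assumes "(x, y) \<in> P" "t \<in> {m+2..T}"
  shows "x t \<le> past_rhs t y"
  unfolding past_rhs_def
proof (rule x_le_rhs)
  show "y (t - s) = 0 \<or> y (t - s) = 1" if "s \<le> m + 1" for s
    by (rule UCP_binary[OF assms(1)]) (use that assms(2) in auto)
  show "p + L + 1 \<le> q"
    if "p < r" "r < q" "q \<le> m + 1" "y (t - p) = 0" "y (t - r) = 1" "y (t - q) = 0" for p r q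
  proof -
    have "t - q + L + 1 \<le> t - p"
      by (rule UCP_min_up[OF assms(1)]) (use that assms(2) in auto)
    then show ?thesis using that assms(2) by auto
  qed
  show "x t \<le> (Vu + (Cu - Vu)) * y (t - 0)"
    using UCP_output_le[OF assms(1), of t] assms(2) by auto
  show "x t \<le> Vu + (real k - 1) * V" if "1 \<le> k" "k \<le> m + 1" "y (t - k) = 0" for k
  proof -
    have "x (t - k + k) \<le> Vu + (real k - 1) * V"
      by (rule UCP_output_after_off[OF assms(1)]) (use that assms(2) V_pos in auto)
    then show ?thesis using that assms(2) by auto
  qed
qed

lemma future_valid:
  assumes "(x, y) \<in> P" "1 \<le> t" "t + m + 1 \<le> T"
  shows "x t \<le> future_rhs t y"
  unfolding future_rhs_def
proof (rule x_le_rhs)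
  show "y (t + s) = 0 \<or> y (t + s) = 1" if "s \<le> m + 1" for s
    by (rule UCP_binary[OF assms(1)]) (use that assms(2,3) in auto)
  show "p + L + 1 \<le> q"
    if "p < r" "r < q" "q \<le> m + 1" "y (t + p) = 0" "y (t + r) = 1" "y (t + q) = 0" for p r q
  proof -
    have "t + p + L + 1 \<le> t + q"
      by (rule UCP_min_up[OF assms(1)]) (use that assms(2,3) in auto)
    then show ?thesis by simp
  qed
  show "x t \<le> (Vu + (Cu - Vu)) * y (t + 0)"
    using UCP_output_le[OF assms(1), of t] assms(2,3) by auto
  show "x t \<le> Vu + (real k - 1) * V" if "1 \<le> k" "k \<le> m + 1" "y (t + k) = 0" for k
  proof -
    have "x (t + k - k) \<le> Vu + (real k - 1) * V"
      by (rule UCP_output_before_off[OF assms(1)]) (use that assms(2,3) V_pos in auto)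
    then show ?thesis by simp
  qed
qed

lemma ramp_level_bounds:
  assumes "k \<le> m"
  shows "Cl \<le> Vu + real k * V \<and> Vu + real k * V \<le> Cu"
proof -
  have "0 \<le> real k * V" using V_pos by simp
  then show ?thesis using weight_nonneg[OF assms] Cl_less_Vu by simp
qed

lemma Cl_run_in_UCP:
  assumes "1 \<le> a" "a \<le> b" "b \<le> T" "a = 1 \<or> b = T \<or> a + L \<le> b + 1"
  shows "run (\<lambda>_. Cl) a b \<in> P"
  by (rule run_in_UCP) (use assms Cl_pos Cl_less_Vu V_pos ramp_level_bounds[of 0] in auto)

lemma dip_run_in_UCP: "run (\<lambda>i. if i = k then Cu - V else Cu) 1 T \<in> P"
proof (rule run_in_UCP)
  show "Cl \<le> (if i = k then Cu - V else Cu) \<and> (if i = k then Cu - V else Cu) \<le> Cu" for i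
    using ramp_level_bounds[of 1] ramp_level_bounds[of 0] L_less_m V_pos by auto
qed (use m_less_T Cl_pos Cl_less_Vu V_pos in auto)

lemma ramp_up_run_in_UCP:
  assumes "s \<le> m" "s < t" "t \<le> T"
  shows "run (\<lambda>i. Vu + real (min (i - (t - s)) s) * V) (t - s) T \<in> P"
proof (rule run_in_UCP)
  show "Cl \<le> Vu + real (min (i - (t - s)) s) * V \<and> Vu + real (min (i - (t - s)) s) * V \<le> Cu" for i
    using ramp_level_bounds[of "min (i - (t - s)) s"] assms by auto
  show "\<bar>Vu + real (min (i + 1 - (t - s)) s) * V - (Vu + real (min (i - (t - s)) s) * V)\<bar> \<le> V"
    if "t - s \<le> i" for i
  proof -
    have "min (i + 1 - (t - s)) s = min (i - (t - s)) s \<or> min (i + 1 - (t - s)) s = min (i - (t - s)) s + 1"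
      using that by auto
    then show ?thesis using V_pos by (auto simp: algebra_simps)
  qed
qed (use assms Cl_pos Cl_less_Vu V_pos in auto)

lemma ramp_down_run_in_UCP:
  assumes "s \<le> m" "1 \<le> t" "t + s < T"
  shows "run (\<lambda>i. Vu + real (min (t + s - i) s) * V) 1 (t + s) \<in> P"
proof (rule run_in_UCP)
  show "Cl \<le> Vu + real (min (t + s - i) s) * V \<and> Vu + real (min (t + s - i) s) * V \<le> Cu" for i
    using ramp_level_bounds[of "min (t + s - i) s"] assms by auto
  show "\<bar>Vu + real (min (t + s - (i + 1)) s) * V - (Vu + real (min (t + s - i) s) * V)\<bar> \<le> V"
    if "i < t + s" for i
  proof -
    have "min (t + s - i) s = min (t + s - (i + 1)) s \<or> min (t + s - i) s = min (t + s - (i + 1)) s + 1"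
      using that by auto
    then show ?thesis using V_pos by (auto simp: algebra_simps)
  qed
qed (use assms Cl_pos Cl_less_Vu V_pos in auto)

definition face :: "nat \<Rightarrow> ((nat \<Rightarrow> real) \<Rightarrow> real) \<Rightarrow> point set" where
  "face t R = {p \<in> P. fst p t = R (snd p)}"

lemma run_in_face:
  assumes "run f a b \<in> P" "indicator {a..b} t * f t = R (indicator {a..b})"
  shows "indicator {a..b} \<in> span (snd ` face t R)"
proof -
  have "run f a b \<in> face t R" using assms unfolding face_def by simp
  then show ?thesis by (metis image_eqI snd_run span_base)
qed

lemma Cl_run_in_face:
  assumes "1 \<le> a" "a \<le> b" "b \<le> T" "a = 1 \<or> b = T \<or> a + L \<le> b + 1" "t \<notin> {a..b}"
    and "R (indicator {a..b}) = 0"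
  shows "indicator {a..b} \<in> span (snd ` face t R)"
proof (rule run_in_face[where f = "\<lambda>_. Cl"])
  show "run (\<lambda>_. Cl) a b \<in> P" using assms by (intro Cl_run_in_UCP)
  show "indicator {a..b} t * Cl = R (indicator {a..b})" using assms by simp
qed

lemma facet_of_face_cover:
  assumes t: "t \<in> {1..T}" and lin: "linear (\<lambda>p. fst p t - R (snd p))"
    and full: "R (indicator {1..T}) = Cu"
    and cover: "\<And>c. c \<in> {1..<T} \<Longrightarrow>
      indicator {1..c} \<in> span (snd ` face t R) \<or> indicator {c+1..T} \<in> span (snd ` face t R)"
  shows "affdim {p \<in> convex hull P. fst p t = R (snd p)} = affdim (convex hull P) - 1"
proof -
  define \<psi> where "\<psi> p = fst p t - R (snd p)" for p :: point
  define dip where "dip k = run (\<lambda>i. if i = k then Cu - V else Cu) 1 T" for k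
  define X where "X = insert (dip t) {p \<in> P. \<psi> p = 0}"
  have face_eq: "face t R = {p \<in> P. \<psi> p = 0}" unfolding face_def \<psi>_def by auto
  have psi_dip: "\<psi> (dip k) = (if k = t then - V else 0)" for k
    using t full by (simp add: \<psi>_def dip_def indicator_def)
  have dip_P: "dip k \<in> P" for k
    unfolding dip_def by (rule dip_run_in_UCP)
  have dip_X: "dip k \<in> X" for k
    using dip_P psi_dip unfolding X_def by auto
  \<comment> \<open>\<open>dip 0\<close> is the run at full output, since \<open>0 \<notin> {1..T}\<close>.\<close>
  have x_units: "(indicator {k}, 0) \<in> span X" if "k \<in> {1..T}" for k
  proof -
    have "dip 0 - dip k = V *\<^sub>R (indicator {k}, 0)"
      using that by (auto simp: dip_def run_def indicator_def fun_eq_iff scaleR_fun_def)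
    moreover have "dip 0 - dip k \<in> span X"
      using dip_X by (intro span_diff span_base)
    ultimately show ?thesis
      using V_pos span_scale[of "V *\<^sub>R (indicator {k}, 0)" X "1 / V"] by simp
  qed
  have "face t R \<subseteq> span X"
    unfolding face_eq X_def by (auto intro: span_base)
  then have embed: "(0, y) \<in> span X" if "y \<in> span (snd ` face t R)" for y
    using that x_units by (intro zero_snd_in_span[where T = T]) (auto simp: face_def)
  have "indicator {1..T} \<in> snd ` face t R"
    using dip_P[of 0] psi_dip[of 0] t unfolding face_eq by (force simp: dip_def)
  then have "indicator {k} \<in> span (snd ` face t R)" if "k \<in> {1..T}" for k
    using unit_indicators_in_span[OF span_base cover that] by blast
  then have "unit_points T \<subseteq> span X"
    using x_units embed unfolding unit_points_def by auto
  moreover have "0 \<in> P"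
    using Cl_pos Cl_less_Vu by (intro zero_in_UCP) simp
  ultimately have "affdim {p \<in> convex hull P. \<psi> p = 0} = affdim (convex hull P) - 1"
    using lin dip_P psi_dip[of t] V_pos UCP_subset_span_unit_points
    by (intro affdim_hyperplane_section_convex_hull[where W = "unit_points T" and p = "dip t"])
      (auto simp: \<psi>_def unit_points_def X_def)
  then show ?thesis by (simp add: \<psi>_def)
qed

context
  fixes t :: nat
  assumes t: "t \<in> {m+2..T}"
begin

lemma past_rhs_indicator:
  "a \<le> t \<Longrightarrow> past_rhs t (indicator {a..b}) = rhs (indicator {t - b..t - a})"
  unfolding past_rhs_def by (rule rhs_cong, rule indicator_reflect) (use t in auto)

lemma past_rhs_indicator_after: "t < a \<Longrightarrow> past_rhs t (indicator {a..b}) = 0"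
  unfolding past_rhs_def by (rule rhs_zero_window) (auto simp: indicator_def)

lemma past_face_ramp:
  assumes "s \<in> S \<or> s = 0 \<and> \<eta> = 0"
  shows "indicator {t - s..T} \<in> span (snd ` face t (past_rhs t))"
proof (rule run_in_face)
  have "s \<le> m" using assms alpha_less_beta beta_le_m by auto
  then show "run (\<lambda>i. Vu + real (min (i - (t - s)) s) * V) (t - s) T \<in> P"
    using t by (intro ramp_up_run_in_UCP) auto
  have "past_rhs t (indicator {t - s..T}) = Vu + real s * V"
    using t \<open>s \<le> m\<close> rhs_indicator_ramp[OF assms] by (simp add: past_rhs_indicator)
  then show "indicator {t - s..T} t * (Vu + real (min (t - (t - s)) s) * V)
      = past_rhs t (indicator {t - s..T})"
    using t \<open>s \<le> m\<close> by simp
qed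

lemma past_face_switch:
  assumes "\<eta> = 0 \<or> \<eta> * V = Cu - Vu \<or> (\<eta> = real L \<and> L \<in> S)"
  shows "indicator {1..t - 1} \<in> span (snd ` face t (past_rhs t))
    \<or> indicator {t..T} \<in> span (snd ` face t (past_rhs t))"
  using assms
proof (elim disjE)
  assume "\<eta> = 0"
  then show ?thesis using past_face_ramp[of 0] by simp
next
  assume "\<eta> * V = Cu - Vu"
  have "past_rhs t (indicator {1..t - 1}) = rhs (indicator {1..t - 1})"
    using t by (simp add: past_rhs_indicator)
  also have "\<dots> = 0"
    using \<open>\<eta> * V = Cu - Vu\<close> t by (intro rhs_indicator_off_now) auto
  finally have "past_rhs t (indicator {1..t - 1}) = 0" .
  then show ?thesis using t by (intro disjI1 Cl_run_in_face) auto
next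
  assume L: "\<eta> = real L \<and> L \<in> S"
  have "past_rhs t (indicator {t - L..t - 1}) = rhs (indicator {1..L})"
    using t L_less_m by (subst past_rhs_indicator) auto
  also have "\<dots> = 0"
    using L by (intro rhs_indicator_L) auto
  finally have "past_rhs t (indicator {t - L..t - 1}) = 0" .
  then have "indicator {t - L..t - 1} \<in> span (snd ` face t (past_rhs t))"
    using t L_less_m L_pos by (intro Cl_run_in_face) auto
  moreover have "indicator {t..T} = indicator {t - L..T} - (indicator {t - L..t - 1} :: nat \<Rightarrow> real)"
    using t L_pos by (auto simp: indicator_def fun_eq_iff)
  ultimately show ?thesis
    using past_face_ramp[of L] L span_diff by fastforce
qed

lemma past_face_cover:
  assumes eta: "\<eta> = 0 \<or> \<eta> * V = Cu - Vu \<or> (\<eta> = real L \<and> L \<in> S)" and c: "c \<in> {1..<T}"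
  shows "indicator {1..c} \<in> span (snd ` face t (past_rhs t))
    \<or> indicator {c+1..T} \<in> span (snd ` face t (past_rhs t))"
proof -
  consider "c + 2 \<le> t" "t - c - 1 \<in> S" | "c + 2 \<le> t" "t - c - 1 \<notin> S" | "c + 1 = t" | "t \<le> c"
    by linarith
  then show ?thesis
  proof cases
    case 1
    then show ?thesis using past_face_ramp[of "t - c - 1"] by (simp add: Suc_diff_Suc)
  next
    case 2
    have "past_rhs t (indicator {1..c}) = rhs (indicator {t - c..t - 1})"
      using c t by (simp add: past_rhs_indicator)
    also have "\<dots> = 0"
      using 2 c t by (intro rhs_indicator_late_start) auto
    finally have "past_rhs t (indicator {1..c}) = 0" .
    then show ?thesis using 2 c t by (simp add: Cl_run_in_face)
  next
    case 3
    then show ?thesis using past_face_switch[OF eta] by auto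
  next
    case 4
    then show ?thesis
      using c t past_rhs_indicator_after[of "c + 1" T] by (simp add: Cl_run_in_face)
  qed
qed

lemma past_facet:
  assumes "\<eta> = 0 \<or> \<eta> * V = Cu - Vu \<or> (\<eta> = real L \<and> L \<in> S)"
  shows "affdim {p \<in> convex hull P. fst p t = past_rhs t (snd p)} = affdim (convex hull P) - 1"
proof (rule facet_of_face_cover)
  show "linear (\<lambda>p. fst p t - past_rhs t (snd p))"
    unfolding past_rhs_def by (rule linear_window_functional)
  have "past_rhs t (indicator {1..T}) = rhs (indicator {0..t - 1})"
    using t by (simp add: past_rhs_indicator)
  also have "\<dots> = Cu"
    using t by (subst rhs_indicator_full) auto
  finally show "past_rhs t (indicator {1..T}) = Cu" .
qed (use t past_face_cover[OF assms] in auto)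

end

context
  fixes t :: nat
  assumes t: "1 \<le> t" "t + m + 1 \<le> T"
begin

lemma future_rhs_indicator:
  "t \<le> b \<Longrightarrow> future_rhs t (indicator {a..b}) = rhs (indicator {a - t..b - t})"
  unfolding future_rhs_def by (rule rhs_cong, rule indicator_shift)

lemma future_rhs_indicator_before: "b < t \<Longrightarrow> future_rhs t (indicator {a..b}) = 0"
  unfolding future_rhs_def by (rule rhs_zero_window) (auto simp: indicator_def)

lemma future_face_ramp:
  assumes "s \<in> S \<or> s = 0 \<and> \<eta> = 0"
  shows "indicator {1..t + s} \<in> span (snd ` face t (future_rhs t))"
proof (rule run_in_face)
  have "s \<le> m" using assms alpha_less_beta beta_le_m by auto
  then show "run (\<lambda>i. Vu + real (min (t + s - i) s) * V) 1 (t + s) \<in> P"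
    using t by (intro ramp_down_run_in_UCP) auto
  have "future_rhs t (indicator {1..t + s}) = Vu + real s * V"
    using t rhs_indicator_ramp[OF assms] by (simp add: future_rhs_indicator)
  then show "indicator {1..t + s} t * (Vu + real (min (t + s - t) s) * V)
      = future_rhs t (indicator {1..t + s})"
    using t by simp
qed

lemma future_face_switch:
  assumes "\<eta> = 0 \<or> \<eta> * V = Cu - Vu \<or> (\<eta> = real L \<and> L \<in> S)"
  shows "indicator {1..t} \<in> span (snd ` face t (future_rhs t))
    \<or> indicator {t + 1..T} \<in> span (snd ` face t (future_rhs t))"
  using assms
proof (elim disjE)
  assume "\<eta> = 0"
  then show ?thesis using future_face_ramp[of 0] by simp
next
  assume "\<eta> * V = Cu - Vu"
  have "future_rhs t (indicator {t + 1..T}) = rhs (indicator {1..T - t})"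
    using t by (simp add: future_rhs_indicator)
  also have "\<dots> = 0"
    using \<open>\<eta> * V = Cu - Vu\<close> t by (intro rhs_indicator_off_now) auto
  finally have "future_rhs t (indicator {t + 1..T}) = 0" .
  then show ?thesis using t by (simp add: Cl_run_in_face)
next
  assume L: "\<eta> = real L \<and> L \<in> S"
  have "future_rhs t (indicator {t + 1..t + L}) = rhs (indicator {1..L})"
    by (simp add: future_rhs_indicator)
  also have "\<dots> = 0"
    using L by (intro rhs_indicator_L) auto
  finally have "future_rhs t (indicator {t + 1..t + L}) = 0" .
  then have "indicator {t + 1..t + L} \<in> span (snd ` face t (future_rhs t))"
    using t L_less_m L_pos by (intro Cl_run_in_face) auto
  moreover have "indicator {1..t} = indicator {1..t + L} - (indicator {t + 1..t + L} :: nat \<Rightarrow> real)"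
    using t L_pos by (auto simp: indicator_def fun_eq_iff)
  ultimately show ?thesis
    using future_face_ramp[of L] L span_diff by fastforce
qed

lemma future_face_cover:
  assumes eta: "\<eta> = 0 \<or> \<eta> * V = Cu - Vu \<or> (\<eta> = real L \<and> L \<in> S)" and c: "c \<in> {1..<T}"
  shows "indicator {1..c} \<in> span (snd ` face t (future_rhs t))
    \<or> indicator {c+1..T} \<in> span (snd ` face t (future_rhs t))"
proof -
  consider "c < t" | "c = t" | "t < c" "c - t \<in> S" | "t < c" "c - t \<notin> S"
    by linarith
  then show ?thesis
  proof cases
    case 1
    then show ?thesis
      using c t future_rhs_indicator_before[of c 1] by (simp add: Cl_run_in_face)
  next
    case 2
    then show ?thesis using future_face_switch[OF eta] by auto
  next
    case 3
    then show ?thesis using future_face_ramp[of "c - t"] by simp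
  next
    case 4
    have "future_rhs t (indicator {c + 1..T}) = rhs (indicator {c + 1 - t..T - t})"
      using c t by (simp add: future_rhs_indicator)
    also have "\<dots> = 0"
      using 4 c t by (intro rhs_indicator_late_start) auto
    finally have "future_rhs t (indicator {c + 1..T}) = 0" .
    then show ?thesis using 4 c by (simp add: Cl_run_in_face)
  qed
qed

lemma future_facet:
  assumes "\<eta> = 0 \<or> \<eta> * V = Cu - Vu \<or> (\<eta> = real L \<and> L \<in> S)"
  shows "affdim {p \<in> convex hull P. fst p t = future_rhs t (snd p)} = affdim (convex hull P) - 1"
proof (rule facet_of_face_cover)
  show "linear (\<lambda>p. fst p t - future_rhs t (snd p))"
    unfolding future_rhs_def by (rule linear_window_functional)
  have "future_rhs t (indicator {1..T}) = rhs (indicator {0..T - t})"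
    using t by (simp add: future_rhs_indicator)
  also have "\<dots> = Cu"
    using t by (subst rhs_indicator_full) auto
  finally show "future_rhs t (indicator {1..T}) = Cu" .
qed (use t future_face_cover[OF assms] in auto)

end

end

theorem proposition6:
  fixes T L l :: nat and Cu Cl V Vu \<eta> :: real and \<alpha> \<beta> smax :: nat
  assumes "T \<ge> 1" "L \<ge> 1" "l \<ge> 1"
    and "Cu > Cl" "Cl > 0" "V > 0" "Vu + V \<le> Cu" "Cl < Vu" "Vu < Cl + V"
    and "0 \<le> \<eta>" "\<eta> \<le> min (real L) ((Cu - Vu) / V)"
    and "int L + 1 \<le> int smax" "int smax \<le> int T - 2"
    and "int smax \<le> \<lfloor>(Cu - Vu) / V\<rfloor>"
    and "1 \<le> \<alpha>" "\<alpha> < \<beta>" "\<beta> \<le> smax"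
    and "\<beta> = \<alpha> + 1 \<or> smax \<le> L + \<alpha>"
  defines "Q \<equiv> convex hull (UCP T L l Cu Cl V Vu)"
    and "rhs1 \<equiv> \<lambda>t (p::point). (Vu + \<eta> * V) * snd p t + (Cu - Vu - \<eta> * V) * snd p (t - 1)
            - (\<Sum>s\<in>{1..\<alpha>} \<union> {\<beta>..smax}. (Cu - Vu - real s * V) * (snd p (t - s) - snd p (t - s - 1)))"
    and "rhs2 \<equiv> \<lambda>t (p::point). (Vu + \<eta> * V) * snd p t + (Cu - Vu - \<eta> * V) * snd p (t + 1)
            - (\<Sum>s\<in>{1..\<alpha>} \<union> {\<beta>..smax}. (Cu - Vu - real s * V) * (snd p (t + s) - snd p (t + s + 1)))"
  shows "(\<forall>t\<in>{smax + 2..T}. valid_ineq Q (\<lambda>p. fst p t) (rhs1 t))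
       \<and> (\<forall>t. 1 \<le> t \<and> int t \<le> int T - int smax - 1 \<longrightarrow> valid_ineq Q (\<lambda>p. fst p t) (rhs2 t))
       \<and> ((\<eta> = 0 \<or> \<eta> = (Cu - Vu) / V \<or> (\<eta> = real L \<and> L \<in> {1..\<alpha>} \<union> {\<beta>..smax})) \<longrightarrow>
            (\<forall>t\<in>{smax + 2..T}. facet_ineq Q (\<lambda>p. fst p t) (rhs1 t))
          \<and> (\<forall>t. 1 \<le> t \<and> int t \<le> int T - int smax - 1 \<longrightarrow> facet_ineq Q (\<lambda>p. fst p t) (rhs2 t)))"
proof -
  have "real smax \<le> (Cu - Vu) / V"
    using assms(14) by (simp add: le_floor_iff)
  then have "\<eta> * V \<le> Cu - Vu" "real smax * V \<le> Cu - Vu"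
    using assms(6,11) by (auto simp: pos_le_divide_eq)
  then interpret ucp L smax \<alpha> \<beta> \<eta> Cu V Vu T l Cl
    using assms by unfold_locales auto
  have rhs1_eq: "rhs1 t p = past_rhs t (snd p)" for t p
    unfolding rhs1_def past_rhs_def rhs_def by (simp add: diff_diff_add)
  have rhs2_eq: "rhs2 t p = future_rhs t (snd p)" for t p
    unfolding rhs2_def future_rhs_def rhs_def by (simp add: add.assoc)
  have valid1: "valid_ineq Q (\<lambda>p. fst p t) (rhs1 t)" if "t \<in> {smax + 2..T}" for t
    unfolding Q_def rhs1_eq past_rhs_def
    by (intro valid_ineq_convex_hull linear_window_functional)
      (use past_valid that in \<open>auto simp: valid_ineq_def past_rhs_def\<close>)
  have valid2: "valid_ineq Q (\<lambda>p. fst p t) (rhs2 t)" if "1 \<le> t" "t + smax + 1 \<le> T" for t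
    unfolding Q_def rhs2_eq future_rhs_def
    by (intro valid_ineq_convex_hull linear_window_functional)
      (use future_valid that in \<open>auto simp: valid_ineq_def future_rhs_def\<close>)
  have "\<eta> = 0 \<or> \<eta> = (Cu - Vu) / V \<or> \<eta> = real L \<and> L \<in> S \<Longrightarrow> \<eta> = 0 \<or> \<eta> * V = Cu - Vu \<or> \<eta> = real L \<and> L \<in> S"
    using assms(6) by auto
  then show ?thesis
    using valid1 valid2 past_facet future_facet
    by (auto simp: facet_ineq_def Q_def rhs1_eq rhs2_eq)
qed

end
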